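(* Assume (A2) and a congestion game payoff structure in which each resource reward $w_r$ is continuously differentiable. Then the steady-state game is a full potential game: there exists a continuously differentiable $U:\mathbb R^n_{\ge0}\to\mathbb R$ with $\mathcal F=\nabla U$ on $X_{\mathcal U_D}$. Moreover, if every $w_r$ is nonincreasing, the set of Nash equilibria of $\mathcal F$ is compact and convex; and if every $w_r$ is strictly decreasing, the equilibrium resource flows $\sigma_r(x)$, $r\in\mathcal R$, take the same value at every Nash equilibrium $x$ of $\mathcal F$.
   Context: Model: classes $c\in[C]$ with masses $m^c>0$, finite state sets $\mathcal S^c$, nonempty finite admissible action sets $\mathcal A^c(s)$ ($\mathcal A^c=\bigcup_s\mathcal A^c(s)$), transition kernels $\phi^c(\cdot\mid s,a)$. $\mathcal U^c_D$ = deterministic policies (maps assigning to each $s$ an action $u(s)\in\mathcal A^c(s)$), $n^c=|\mathcal U^c_D|$, $n=\sum_cn^c$. $\phi^{c,u}_{ss'}=\phi^c(s\mid s',u(s'))$. (A2): for all $c,u\in\mathcal U^c_D$, $\phi^{c,u}$ has exactly one recurrent communicating class; $\eta^{c,u}$ is the unique stationary distribution of the continuous-time chain with generator $\lambda(\phi^{c,u}-I)$. Congestion game payoff structure: all classes have the same action rate $\lambda>0$; there is a finite set of resources $\mathcal R$ and each action $a\in\mathcal A^c$ is a subset $a\subseteq\mathcal R$; each resource has a reward function $w_r:\mathbb R_{\ge0}\to\mathbb R$; for a state-action distribution $\nu=(\nu^c)_c$, $\nu^c\in\mathbb R_{\ge0}^{\mathcal S^c\times\mathcal A^c}$ with total mass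 $m^c$, the flow on $r$ is $\sigma_r=\lambda\sum_c\sum_{s\in\mathcal S^c}\sum_{a\in\mathcal A^c: r\in a}\nu^c[s,a]$ and the single-stage reward is $r^c(s,a,\nu)=\sum_{r\in a}w_r(\sigma_r)$. Steady-state game: $X_{\mathcal U_D}=\prod_c\{x^c\in\mathbb R_{\ge0}^{n^c}:\sum x^c=m^c\}$; for $x\in X_{\mathcal U_D}$, the induced steady-state flow is $\sigma_r(x)=\lambda\sum_c\sum_{s\in\mathcal S^c}\sum_{u\in\mathcal U^c_D: r\in u(s)}\eta^{c,u}(s)x^c[u]$ and $\mathcal F^c_u(x)=\sum_{s\in\mathcal S^c}\eta^{c,u}(s)\sum_{r\in u(s)}w_r(\sigma_r(x))$, $\mathcal F=(\mathcal F^c_u)_{c,u}\in\mathbb R^n$. $x$ is a Nash equilibrium of $\mathcal F$ if for all $c,u$: $x^c[u]>0\Rightarrow\mathcal F^c_u(x)\ge\mathcal F^c_v(x)$ for all $v\in\mathcal U^c_D$. *)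

theory Defs
  imports "HOL-Analysis.Analysis" "HOL-Library.FuncSet"
begin

text \<open>Classes are the elements of a finite type 'c (so [C] = UNIV),
resources the elements of a finite type 'r (so the resource set is UNIV),
states of class c form a subset S c of a finite type 's.
Actions are resource subsets; A c s is the admissible action set in state s.
phi c s' s a is the probability phi^c(s' | s, a) of moving to s' from s under a.\<close>

definition policies :: "('c \<Rightarrow> 's set) \<Rightarrow> ('c \<Rightarrow> 's \<Rightarrow> 'r set set) \<Rightarrow> 'c \<Rightarrow> ('s \<Rightarrow> 'r set) set" where
  "policies S A c = PiE (S c) (A c)"

definition idx :: "('c \<Rightarrow> 's set) \<Rightarrow> ('c \<Rightarrow> 's \<Rightarrow> 'r set set) \<Rightarrow> ('c \<times> ('s \<Rightarrow> 'r set)) set" where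
  "idx S A = {(c, u). u \<in> policies S A c}"

definition tstep :: "('c \<Rightarrow> 's set) \<Rightarrow> ('c \<Rightarrow> 's \<Rightarrow> 's \<Rightarrow> 'r set \<Rightarrow> real) \<Rightarrow> 'c \<Rightarrow> ('s \<Rightarrow> 'r set) \<Rightarrow> 's \<Rightarrow> 's \<Rightarrow> bool" where
  "tstep S phi c u s t \<longleftrightarrow> s \<in> S c \<and> t \<in> S c \<and> phi c t s (u s) > 0"

definition reach :: "('c \<Rightarrow> 's set) \<Rightarrow> ('c \<Rightarrow> 's \<Rightarrow> 's \<Rightarrow> 'r set \<Rightarrow> real) \<Rightarrow> 'c \<Rightarrow> ('s \<Rightarrow> 'r set) \<Rightarrow> 's \<Rightarrow> 's \<Rightarrow> bool" where
  "reach S phi c u = (tstep S phi c u)\<^sup>*\<^sup>*"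

definition comm_class :: "('c \<Rightarrow> 's set) \<Rightarrow> ('c \<Rightarrow> 's \<Rightarrow> 's \<Rightarrow> 'r set \<Rightarrow> real) \<Rightarrow> 'c \<Rightarrow> ('s \<Rightarrow> 'r set) \<Rightarrow> 's set \<Rightarrow> bool" where
  "comm_class S phi c u K \<longleftrightarrow>
     (\<exists>s \<in> S c. K = {t \<in> S c. reach S phi c u s t \<and> reach S phi c u t s})"

text \<open>A communicating class of a finite chain is recurrent iff it is closed.\<close>
definition recurrent_class :: "('c \<Rightarrow> 's set) \<Rightarrow> ('c \<Rightarrow> 's \<Rightarrow> 's \<Rightarrow> 'r set \<Rightarrow> real) \<Rightarrow> 'c \<Rightarrow> ('s \<Rightarrow> 'r set) \<Rightarrow> 's set \<Rightarrow> bool" where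
  "recurrent_class S phi c u K \<longleftrightarrow>
     comm_class S phi c u K \<and> (\<forall>s \<in> K. \<forall>t. tstep S phi c u s t \<longrightarrow> t \<in> K)"

definition A2 :: "('c \<Rightarrow> 's set) \<Rightarrow> ('c \<Rightarrow> 's \<Rightarrow> 'r set set) \<Rightarrow> ('c \<Rightarrow> 's \<Rightarrow> 's \<Rightarrow> 'r set \<Rightarrow> real) \<Rightarrow> bool" where
  "A2 S A phi \<longleftrightarrow> (\<forall>c. \<forall>u \<in> policies S A c. \<exists>!K. recurrent_class S phi c u K)"

text \<open>Stationary distributions of the continuous-time chain with generator
 lam (phi^{c,u} - I), where phi^{c,u}_{s s'} = phi^c(s | s', u(s')).
 Distributions are functions on 's vanishing outside S c.\<close>
definition stationary :: "('c \<Rightarrow> 's set) \<Rightarrow> ('c \<Rightarrow> 's \<Rightarrow> 's \<Rightarrow> 'r set \<Rightarrow> real) \<Rightarrow> real \<Rightarrow> 'c \<Rightarrow> ('s \<Rightarrow> 'r set) \<Rightarrow> ('s \<Rightarrow> real) \<Rightarrow> bool" where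
  "stationary S phi lam c u \<eta> \<longleftrightarrow>
     (\<forall>s. s \<notin> S c \<longrightarrow> \<eta> s = 0) \<and> (\<forall>s \<in> S c. \<eta> s \<ge> 0) \<and> (\<Sum>s \<in> S c. \<eta> s) = 1 \<and>
     (\<forall>s \<in> S c. lam * ((\<Sum>s' \<in> S c. phi c s s' (u s') * \<eta> s') - \<eta> s) = 0)"

text \<open>eta^{c,u}: the unique stationary distribution (unique under (A2)).\<close>
definition eta :: "('c \<Rightarrow> 's set) \<Rightarrow> ('c \<Rightarrow> 's \<Rightarrow> 's \<Rightarrow> 'r set \<Rightarrow> real) \<Rightarrow> real \<Rightarrow> 'c \<Rightarrow> ('s \<Rightarrow> 'r set) \<Rightarrow> 's \<Rightarrow> real" where
  "eta S phi lam c u = (THE \<eta>. stationary S phi lam c u \<eta>)"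

text \<open>Steady-state strategy set X_{U_D}, embedded in the vector type
 (coordinates outside idx are 0).\<close>
definition XUD :: "('c::finite \<Rightarrow> 's::finite set) \<Rightarrow> ('c \<Rightarrow> 's \<Rightarrow> 'r::finite set set) \<Rightarrow> ('c \<Rightarrow> real)
    \<Rightarrow> (real ^ ('c \<times> ('s \<Rightarrow> 'r set))) set" where
  "XUD S A m = {x. (\<forall>i. i \<notin> idx S A \<longrightarrow> x $ i = 0) \<and> (\<forall>i \<in> idx S A. x $ i \<ge> 0) \<and>
                   (\<forall>c. (\<Sum>u \<in> policies S A c. x $ (c, u)) = m c)}"

definition Rn_nonneg :: "('c::finite \<Rightarrow> 's::finite set) \<Rightarrow> ('c \<Rightarrow> 's \<Rightarrow> 'r::finite set set)
    \<Rightarrow> (real ^ ('c \<times> ('s \<Rightarrow> 'r set))) set" where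
  "Rn_nonneg S A = {x. (\<forall>i. i \<notin> idx S A \<longrightarrow> x $ i = 0) \<and> (\<forall>i \<in> idx S A. x $ i \<ge> 0)}"

definition flow :: "('c::finite \<Rightarrow> 's::finite set) \<Rightarrow> ('c \<Rightarrow> 's \<Rightarrow> 'r::finite set set)
    \<Rightarrow> ('c \<Rightarrow> 's \<Rightarrow> 's \<Rightarrow> 'r set \<Rightarrow> real) \<Rightarrow> real \<Rightarrow> 'r \<Rightarrow> real ^ ('c \<times> ('s \<Rightarrow> 'r set)) \<Rightarrow> real" where
  "flow S A phi lam r x =
     lam * (\<Sum>c\<in>UNIV. \<Sum>s \<in> S c. \<Sum>u \<in> {u \<in> policies S A c. r \<in> u s}. eta S phi lam c u s * x $ (c, u))"

definition payoff :: "('c::finite \<Rightarrow> 's::finite set) \<Rightarrow> ('c \<Rightarrow> 's \<Rightarrow> 'r::finite set set)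
    \<Rightarrow> ('c \<Rightarrow> 's \<Rightarrow> 's \<Rightarrow> 'r set \<Rightarrow> real) \<Rightarrow> real \<Rightarrow> ('r \<Rightarrow> real \<Rightarrow> real)
    \<Rightarrow> 'c \<Rightarrow> ('s \<Rightarrow> 'r set) \<Rightarrow> real ^ ('c \<times> ('s \<Rightarrow> 'r set)) \<Rightarrow> real" where
  "payoff S A phi lam w c u x =
     (\<Sum>s \<in> S c. eta S phi lam c u s * (\<Sum>r \<in> u s. w r (flow S A phi lam r x)))"

definition nash_set :: "('c::finite \<Rightarrow> 's::finite set) \<Rightarrow> ('c \<Rightarrow> 's \<Rightarrow> 'r::finite set set)
    \<Rightarrow> ('c \<Rightarrow> 's \<Rightarrow> 's \<Rightarrow> 'r set \<Rightarrow> real) \<Rightarrow> real \<Rightarrow> ('r \<Rightarrow> real \<Rightarrow> real) \<Rightarrow> ('c \<Rightarrow> real)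
    \<Rightarrow> (real ^ ('c \<times> ('s \<Rightarrow> 'r set))) set" where
  "nash_set S A phi lam w m = {x \<in> XUD S A m.
     \<forall>c. \<forall>u \<in> policies S A c. x $ (c, u) > 0 \<longrightarrow>
        (\<forall>v \<in> policies S A c. payoff S A phi lam w c u x \<ge> payoff S A phi lam w c v x)}"

definition C1_nonneg :: "(real \<Rightarrow> real) \<Rightarrow> bool" where
  "C1_nonneg f \<longleftrightarrow> (\<exists>f'. (\<forall>t \<ge> 0. (f has_real_derivative f' t) (at t within {0..})) \<and>
                          continuous_on {0..} f')"

end

theory Submission
  imports Defs
begin

(* The flows sigma_r(x) are linear in x, with coefficients lam * usage r c u, where usage r c u is
   the stationary probability that policy u plays an action containing r; and the payoffs are
   F^c_u(x) = sum_r w_r(sigma_r x) * usage r c u.  Hence U(x) = (1/lam) sum_r int_0^{sigma_r x} w_r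
   has gradient F; only continuity of the w_r is needed.  For this the stationary weights must be
   nonnegative: under (A2) a stationary distribution exists by Brouwer's theorem, and it is unique,
   since the positive and the negative part of the difference of two of them are again invariant
   and their supports would contain two disjoint recurrent classes.

   A Nash equilibrium x satisfies sum_r w_r(sigma_r x) * (sigma_r y - sigma_r x) <= 0 for all
   y in X.  Adding this for two equilibria x and y gives
   sum_r (w_r(sigma_r x) - w_r(sigma_r y)) * (sigma_r y - sigma_r x) <= 0, a sum of nonnegative
   terms when the w_r are nonincreasing.  So all equilibria face the same rewards, which stay
   constant on the segment between them (convexity) and force equal flows when the w_r are
   strictly decreasing. *)

lemma stochastic_fixpoint_abs:
  fixes P :: "'s \<Rightarrow> 's \<Rightarrow> real"
  assumes "finite T"
    and nonneg: "\<And>s t. s \<in> T \<Longrightarrow> t \<in> T \<Longrightarrow> 0 \<le> P t s"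
    and stochastic: "\<And>s. s \<in> T \<Longrightarrow> (\<Sum>t\<in>T. P t s) = 1"
    and fixed: "\<And>t. t \<in> T \<Longrightarrow> (\<Sum>s\<in>T. P t s * d s) = d t"
    and "t \<in> T"
  shows "(\<Sum>s\<in>T. P t s * \<bar>d s\<bar>) = \<bar>d t\<bar>"
proof -
  have le: "\<bar>d t\<bar> \<le> (\<Sum>s\<in>T. P t s * \<bar>d s\<bar>)" if "t \<in> T" for t
  proof -
    have "\<bar>d t\<bar> = \<bar>\<Sum>s\<in>T. P t s * d s\<bar>" using fixed[OF that] by simp
    also have "\<dots> \<le> (\<Sum>s\<in>T. \<bar>P t s * d s\<bar>)" by (rule sum_abs)
    also have "\<dots> = (\<Sum>s\<in>T. P t s * \<bar>d s\<bar>)"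
      using nonneg that by (intro sum.cong) (auto simp: abs_mult)
    finally show ?thesis .
  qed
  \<comment> \<open>the inequalities are tight because \<open>P\<close> preserves total mass\<close>
  have "(\<Sum>t\<in>T. \<Sum>s\<in>T. P t s * \<bar>d s\<bar>) = (\<Sum>s\<in>T. \<bar>d s\<bar> * (\<Sum>t\<in>T. P t s))"
    by (subst sum.swap) (simp add: sum_distrib_left mult.commute)
  also have "\<dots> = (\<Sum>t\<in>T. \<bar>d t\<bar>)"
    using stochastic by simp
  finally have "(\<Sum>t\<in>T. (\<Sum>s\<in>T. P t s * \<bar>d s\<bar>) - \<bar>d t\<bar>) = 0"
    by (simp add: sum_subtractf)
  then have "\<forall>t\<in>T. (\<Sum>s\<in>T. P t s * \<bar>d s\<bar>) - \<bar>d t\<bar> = 0"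
    using sum_nonneg_eq_0_iff[OF \<open>finite T\<close>, of "\<lambda>t. (\<Sum>s\<in>T. P t s * \<bar>d s\<bar>) - \<bar>d t\<bar>"] le
    by simp
  then show ?thesis
    using \<open>t \<in> T\<close> by simp
qed

lemma stochastic_fixpoint_pos_part:
  fixes P :: "'s \<Rightarrow> 's \<Rightarrow> real"
  assumes "finite T"
    and nonneg: "\<And>s t. s \<in> T \<Longrightarrow> t \<in> T \<Longrightarrow> 0 \<le> P t s"
    and stochastic: "\<And>s. s \<in> T \<Longrightarrow> (\<Sum>t\<in>T. P t s) = 1"
    and fixed: "\<And>t. t \<in> T \<Longrightarrow> (\<Sum>s\<in>T. P t s * d s) = d t"
    and "t \<in> T"
  shows "(\<Sum>s\<in>T. P t s * max (d s) 0) = max (d t) 0"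
proof -
  have max_eq: "max x 0 = (\<bar>x\<bar> + x) / 2" for x :: real
    by auto
  show ?thesis
    using stochastic_fixpoint_abs[OF assms] fixed[OF \<open>t \<in> T\<close>]
    by (simp add: max_eq distrib_left sum.distrib flip: sum_divide_distrib)
qed

lemma fixpoint_support_closed:
  fixes P :: "'s \<Rightarrow> 's \<Rightarrow> real"
  assumes "finite T"
    and nonneg: "\<And>s. s \<in> T \<Longrightarrow> 0 \<le> P t s"
    and fixed: "(\<Sum>s\<in>T. P t s * f s) = f t"
    and f_nonneg: "\<And>s. s \<in> T \<Longrightarrow> 0 \<le> f s"
    and "s \<in> T" "0 < f s" "0 < P t s"
  shows "0 < f t"
proof -
  have "0 < P t s * f s"
    using assms by simp
  also have "\<dots> \<le> (\<Sum>s\<in>T. P t s * f s)"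
    using assms by (intro member_le_sum) auto
  finally show ?thesis
    using fixed by simp
qed

lemma bounded_nonneg_sum_le:
  "bounded {v :: real^'n. (\<forall>i. 0 \<le> v $ i) \<and> (\<Sum>i\<in>UNIV. v $ i) \<le> B}"
proof (rule boundedI)
  fix v :: "real^'n"
  assume "v \<in> {v. (\<forall>i. 0 \<le> v $ i) \<and> (\<Sum>i\<in>UNIV. v $ i) \<le> B}"
  then show "norm v \<le> B"
    using norm_le_l1_cart[of v] by auto
qed

lemma stochastic_matrix_fixed_distribution:
  fixes P :: "'s::finite \<Rightarrow> 's \<Rightarrow> real"
  assumes "T \<noteq> {}"
    and nonneg: "\<And>s t. s \<in> T \<Longrightarrow> t \<in> T \<Longrightarrow> 0 \<le> P t s"
    and stochastic: "\<And>s. s \<in> T \<Longrightarrow> (\<Sum>t\<in>T. P t s) = 1"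
  shows "\<exists>v. (\<forall>s. s \<notin> T \<longrightarrow> v s = 0) \<and> (\<forall>s\<in>T. 0 \<le> v s) \<and> (\<Sum>s\<in>T. v s) = 1 \<and>
             (\<forall>t\<in>T. (\<Sum>s\<in>T. P t s * v s) = v t)"
proof -
  define D :: "(real^'s) set" where
    "D = {v. (\<forall>s. s \<notin> T \<longrightarrow> v $ s = 0) \<and> (\<forall>s. s \<in> T \<longrightarrow> 0 \<le> v $ s) \<and> (\<Sum>s\<in>T. v $ s) = 1}"
  define f :: "real^'s \<Rightarrow> real^'s" where
    "f v = (\<chi> t. if t \<in> T then \<Sum>s\<in>T. P t s * v $ s else 0)" for v
  have "closed D"
    unfolding D_def
    by (intro closed_Collect_conj closed_Collect_all closed_Collect_imp closed_Collect_eq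
        closed_Collect_le open_Collect_const continuous_intros)
  moreover have "D \<subseteq> {v. (\<forall>i. 0 \<le> v $ i) \<and> (\<Sum>i\<in>UNIV. v $ i) \<le> 1}"
  proof safe
    fix v i assume "v \<in> D"
    then show "0 \<le> v $ i" unfolding D_def by (cases "i \<in> T") auto
    have "(\<Sum>i\<in>UNIV. v $ i) = (\<Sum>i\<in>T. v $ i)"
      using \<open>v \<in> D\<close> unfolding D_def by (intro sum.mono_neutral_right) auto
    then show "(\<Sum>i\<in>UNIV. v $ i) \<le> 1" using \<open>v \<in> D\<close> unfolding D_def by simp
  qed
  ultimately have "compact D"
    using bounded_nonneg_sum_le bounded_subset compact_eq_bounded_closed by blast
  moreover have "convex D"
    unfolding convex_def D_def by (auto simp: sum.distrib simp flip: sum_distrib_left)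
  moreover have "D \<noteq> {}"
  proof -
    obtain s0 where "s0 \<in> T"
      using \<open>T \<noteq> {}\<close> by auto
    then have "(\<chi> s. if s = s0 then 1 else 0) \<in> D"
      unfolding D_def by auto
    then show ?thesis by auto
  qed
  moreover have "continuous_on D f"
    unfolding f_def
  proof (intro continuous_intros)
    show "continuous_on D (\<lambda>v. if t \<in> T then \<Sum>s\<in>T. P t s * v $ s else 0)" for t
      by (cases "t \<in> T") (simp_all, intro continuous_intros)
  qed
  moreover have "f \<in> D \<rightarrow> D"
  proof
    fix v assume v: "v \<in> D"
    have "(\<Sum>t\<in>T. \<Sum>s\<in>T. P t s * v $ s) = (\<Sum>s\<in>T. v $ s * (\<Sum>t\<in>T. P t s))"
      by (subst sum.swap) (simp add: sum_distrib_left mult.commute)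
    also have "\<dots> = 1"
      using stochastic v unfolding D_def by simp
    finally show "f v \<in> D"
      using nonneg v unfolding f_def D_def by (auto intro!: sum_nonneg)
  qed
  ultimately obtain v where "v \<in> D" "f v = v"
    using brouwer by metis
  then show ?thesis
    by (intro exI[of _ "\<lambda>s. v $ s"]) (auto simp: D_def f_def vec_eq_iff split: if_splits)
qed

lemma reach_closed_set:
  assumes closed: "\<And>s t. s \<in> F \<Longrightarrow> tstep S phi c u s t \<Longrightarrow> t \<in> F"
    and "reach S phi c u s t" "s \<in> F"
  shows "t \<in> F"
  using \<open>reach S phi c u s t\<close> \<open>s \<in> F\<close> unfolding reach_def
  by (induction rule: rtranclp_induct) (auto intro: closed)

lemma closed_set_contains_recurrent_class:
  fixes S :: "'c \<Rightarrow> 's::finite set"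
  assumes "F \<subseteq> S c" "F \<noteq> {}"
    and closed: "\<And>s t. s \<in> F \<Longrightarrow> tstep S phi c u s t \<Longrightarrow> t \<in> F"
  shows "\<exists>K. recurrent_class S phi c u K \<and> K \<noteq> {} \<and> K \<subseteq> F"
proof -
  define R where "R s = {t. reach S phi c u s t}" for s
  \<comment> \<open>a state of \<open>F\<close> with the fewest reachable states lies in a closed communicating class\<close>
  obtain s0 where "s0 \<in> F" and fewest: "\<And>s. s \<in> F \<Longrightarrow> card (R s0) \<le> card (R s)"
    using \<open>F \<noteq> {}\<close> ex_has_least_nat[of "\<lambda>s. s \<in> F" _ "\<lambda>s. card (R s)"] by blast
  define K where "K = {t \<in> S c. reach S phi c u s0 t \<and> reach S phi c u t s0}"
  have reach_F: "t \<in> F" if "reach S phi c u s0 t" for t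
    using reach_closed_set[OF closed that \<open>s0 \<in> F\<close>] .
  have "s0 \<in> S c" using \<open>s0 \<in> F\<close> \<open>F \<subseteq> S c\<close> by auto
  then have "comm_class S phi c u K" and "s0 \<in> K"
    unfolding comm_class_def K_def reach_def by auto
  moreover have "K \<subseteq> F"
    unfolding K_def using reach_F by blast
  moreover have "t' \<in> K" if "t \<in> K" and step: "tstep S phi c u t t'" for t t'
  proof -
    have reach_t': "reach S phi c u s0 t'"
      using that unfolding K_def reach_def by auto
    then have "R t' \<subseteq> R s0"
      unfolding R_def reach_def by auto
    moreover have "card (R s0) \<le> card (R t')"
      using fewest reach_F reach_t' by blast
    ultimately have "R t' = R s0"
      by (intro card_seteq) auto
    then have "reach S phi c u t' s0"
      unfolding R_def reach_def by auto
    then show ?thesis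
      using reach_t' step unfolding K_def tstep_def by auto
  qed
  ultimately show ?thesis
    unfolding recurrent_class_def by blast
qed

lemma positive_fixpoint_contains_recurrent_class:
  fixes S :: "'c \<Rightarrow> 's::finite set"
  assumes nonneg: "\<And>s t. s \<in> S c \<Longrightarrow> t \<in> S c \<Longrightarrow> 0 \<le> phi c t s (u s)"
    and fixed: "\<And>t. t \<in> S c \<Longrightarrow> (\<Sum>s\<in>S c. phi c t s (u s) * f s) = f t"
    and f_nonneg: "\<And>s. s \<in> S c \<Longrightarrow> 0 \<le> f s"
    and "s \<in> S c" "0 < f s"
  shows "\<exists>K. recurrent_class S phi c u K \<and> K \<noteq> {} \<and> (\<forall>t\<in>K. 0 < f t)"
proof -
  let ?F = "{s \<in> S c. 0 < f s}"
  have "t \<in> ?F" if "s \<in> ?F" "tstep S phi c u s t" for s t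
    using that fixpoint_support_closed[of "S c" "\<lambda>t s. phi c t s (u s)" t f s] nonneg fixed f_nonneg
    unfolding tstep_def by auto
  then show ?thesis
    using closed_set_contains_recurrent_class[of ?F S c phi u] assms by blast
qed

lemma stationary_fixed:
  assumes "stationary S phi lam c u \<eta>" "lam \<noteq> 0" "t \<in> S c"
  shows "(\<Sum>s\<in>S c. phi c t s (u s) * \<eta> s) = \<eta> t"
  using assms unfolding stationary_def by auto

lemma stationary_unique:
  fixes S :: "'c \<Rightarrow> 's::finite set"
  assumes nonneg: "\<And>s t. s \<in> S c \<Longrightarrow> t \<in> S c \<Longrightarrow> 0 \<le> phi c t s (u s)"
    and stochastic: "\<And>s. s \<in> S c \<Longrightarrow> (\<Sum>t\<in>S c. phi c t s (u s)) = 1"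
    and unique_class: "\<exists>!K. recurrent_class S phi c u K"
    and "lam \<noteq> 0"
    and \<eta>1: "stationary S phi lam c u \<eta>1" and \<eta>2: "stationary S phi lam c u \<eta>2"
  shows "\<eta>1 = \<eta>2"
proof (rule ccontr)
  assume "\<eta>1 \<noteq> \<eta>2"
  define d where "d s = \<eta>1 s - \<eta>2 s" for s
  obtain s0 where "d s0 \<noteq> 0"
    using \<open>\<eta>1 \<noteq> \<eta>2\<close> unfolding d_def fun_eq_iff by auto
  moreover have "d s = 0" if "s \<notin> S c" for s
    using \<eta>1 \<eta>2 that unfolding stationary_def d_def by simp
  ultimately have "s0 \<in> S c" by blast
  \<comment> \<open>applied to \<open>d\<close> and \<open>-d\<close>: the positive and the negative part of \<open>d\<close> both carry a recurrent class\<close>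
  have recurrent_pos: "\<exists>K. recurrent_class S phi c u K \<and> K \<noteq> {} \<and> (\<forall>t\<in>K. 0 < e t)"
    if fixed: "\<And>t. t \<in> S c \<Longrightarrow> (\<Sum>s\<in>S c. phi c t s (u s) * e s) = e t"
      and sum0: "(\<Sum>s\<in>S c. e s) = 0" and "e s0 \<noteq> 0" for e
  proof -
    have "\<exists>s\<in>S c. 0 < e s"
    proof (rule ccontr)
      assume "\<not> (\<exists>s\<in>S c. 0 < e s)"
      then have "\<forall>s\<in>S c. 0 \<le> - e s" by auto
      moreover have "(\<Sum>s\<in>S c. - e s) = 0" using sum0 by (simp add: sum_negf)
      ultimately show False
        using sum_nonneg_eq_0_iff[of "S c" "\<lambda>s. - e s"] \<open>s0 \<in> S c\<close> \<open>e s0 \<noteq> 0\<close> by auto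
    qed
    then obtain s where "s \<in> S c" "0 < max (e s) 0" by auto
    moreover have "(\<Sum>s\<in>S c. phi c t s (u s) * max (e s) 0) = max (e t) 0" if "t \<in> S c" for t
      using stochastic_fixpoint_pos_part[of "S c" "\<lambda>t s. phi c t s (u s)" e] nonneg stochastic fixed that
      by simp
    ultimately have "\<exists>K. recurrent_class S phi c u K \<and> K \<noteq> {} \<and> (\<forall>t\<in>K. 0 < max (e t) 0)"
      using nonneg by (intro positive_fixpoint_contains_recurrent_class[where s=s]) auto
    then show ?thesis
      by (simp add: less_max_iff_disj)
  qed
  have fixed: "(\<Sum>s\<in>S c. phi c t s (u s) * d s) = d t" if "t \<in> S c" for t
    using stationary_fixed[OF \<eta>1 \<open>lam \<noteq> 0\<close> that] stationary_fixed[OF \<eta>2 \<open>lam \<noteq> 0\<close> that]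
    unfolding d_def by (simp add: right_diff_distrib sum_subtractf)
  have sum0: "(\<Sum>s\<in>S c. d s) = 0"
    using \<eta>1 \<eta>2 unfolding stationary_def d_def by (simp add: sum_subtractf)
  obtain K1 where K1: "recurrent_class S phi c u K1" "K1 \<noteq> {}" "\<forall>t\<in>K1. 0 < d t"
    using recurrent_pos[of d] fixed sum0 \<open>d s0 \<noteq> 0\<close> by blast
  have "(\<Sum>s\<in>S c. phi c t s (u s) * - d s) = - d t" if "t \<in> S c" for t
    using fixed[OF that] by (simp add: sum_negf)
  moreover have "(\<Sum>s\<in>S c. - d s) = 0"
    using sum0 by (simp add: sum_negf)
  ultimately obtain K2 where K2: "recurrent_class S phi c u K2" "\<forall>t\<in>K2. 0 < - d t"
    using recurrent_pos[of "\<lambda>s. - d s"] \<open>d s0 \<noteq> 0\<close> by auto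
  have "K1 = K2"
    using unique_class K1 K2 by blast
  then obtain t where "t \<in> K1" "t \<in> K2"
    using K1(2) by auto
  then show False
    using K1(3) K2(2) by fastforce
qed

lemma idx_eq_Sigma: "idx S A = Sigma UNIV (policies S A)"
  unfolding idx_def by auto

lemma sum_idx:
  fixes S :: "'c::finite \<Rightarrow> 's::finite set" and A :: "'c \<Rightarrow> 's \<Rightarrow> 'r::finite set set"
  shows "(\<Sum>(c, u)\<in>idx S A. f c u) = (\<Sum>c\<in>UNIV. \<Sum>u\<in>policies S A c. f c u)"
  unfolding idx_eq_Sigma by (rule sum.Sigma[symmetric]) auto

definition usage :: "('c \<Rightarrow> 's set) \<Rightarrow> ('c \<Rightarrow> 's \<Rightarrow> 's \<Rightarrow> 'r set \<Rightarrow> real) \<Rightarrow> real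
    \<Rightarrow> 'r \<Rightarrow> 'c \<Rightarrow> ('s \<Rightarrow> 'r set) \<Rightarrow> real" where
  "usage S phi lam r c u = (\<Sum>s\<in>{s \<in> S c. r \<in> u s}. eta S phi lam c u s)"

lemma flow_eq_usage:
  "flow S A phi lam r x = lam * (\<Sum>(c, u)\<in>idx S A. usage S phi lam r c u * x $ (c, u))"
proof -
  have "(\<Sum>c\<in>UNIV. \<Sum>s\<in>S c. \<Sum>u\<in>{u \<in> policies S A c. r \<in> u s}. eta S phi lam c u s * x $ (c, u))
      = (\<Sum>c\<in>UNIV. \<Sum>s\<in>S c. \<Sum>u\<in>policies S A c. if r \<in> u s then eta S phi lam c u s * x $ (c, u) else 0)"
    by (simp add: sum.inter_filter)
  also have "\<dots> = (\<Sum>c\<in>UNIV. \<Sum>u\<in>policies S A c. \<Sum>s\<in>S c. if r \<in> u s then eta S phi lam c u s * x $ (c, u) else 0)"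
    by (intro sum.cong refl sum.swap)
  also have "\<dots> = (\<Sum>c\<in>UNIV. \<Sum>u\<in>policies S A c. usage S phi lam r c u * x $ (c, u))"
    unfolding usage_def by (simp add: sum.inter_filter[symmetric] sum_distrib_right)
  also have "\<dots> = (\<Sum>(c, u)\<in>idx S A. usage S phi lam r c u * x $ (c, u))"
    by (rule sum_idx[symmetric])
  finally show ?thesis
    unfolding flow_def by simp
qed

lemma payoff_eq_usage:
  "payoff S A phi lam w c u x = (\<Sum>r\<in>UNIV. w r (flow S A phi lam r x) * usage S phi lam r c u)"
proof -
  have "payoff S A phi lam w c u x
      = (\<Sum>s\<in>S c. \<Sum>r\<in>UNIV. if r \<in> u s then eta S phi lam c u s * w r (flow S A phi lam r x) else 0)"
    unfolding payoff_def by (simp add: sum_distrib_left sum.inter_filter[symmetric])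
  also have "\<dots> = (\<Sum>r\<in>UNIV. \<Sum>s\<in>S c. if r \<in> u s then eta S phi lam c u s * w r (flow S A phi lam r x) else 0)"
    by (rule sum.swap)
  also have "\<dots> = (\<Sum>r\<in>UNIV. w r (flow S A phi lam r x) * usage S phi lam r c u)"
    unfolding usage_def by (simp add: sum.inter_filter[symmetric] sum_distrib_left mult.commute)
  finally show ?thesis .
qed

lemma linear_flow: "linear (flow S A phi lam r)"
  by (rule linearI) (simp_all add: flow_eq_usage algebra_simps sum.distrib sum_distrib_left split_beta)

lemma sum_reward_flow_eq:
  "(\<Sum>r\<in>UNIV. w r (flow S A phi lam r x) * flow S A phi lam r z)
     = lam * (\<Sum>(c, u)\<in>idx S A. payoff S A phi lam w c u x * z $ (c, u))"
proof -
  have "(\<Sum>r\<in>UNIV. w r (flow S A phi lam r x) * flow S A phi lam r z)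
      = lam * (\<Sum>r\<in>UNIV. \<Sum>(c, u)\<in>idx S A. w r (flow S A phi lam r x) * usage S phi lam r c u * z $ (c, u))"
    unfolding flow_eq_usage[of S A phi lam _ z]
    by (simp add: sum_distrib_left split_beta algebra_simps)
  also have "\<dots> = lam * (\<Sum>(c, u)\<in>idx S A. \<Sum>r\<in>UNIV. w r (flow S A phi lam r x) * usage S phi lam r c u * z $ (c, u))"
    by (subst sum.swap) (simp add: split_beta)
  also have "\<dots> = lam * (\<Sum>(c, u)\<in>idx S A. payoff S A phi lam w c u x * z $ (c, u))"
    unfolding payoff_eq_usage by (simp add: sum_distrib_right split_beta)
  finally show ?thesis .
qed

lemma XUD_subset_Rn_nonneg: "XUD S A m \<subseteq> Rn_nonneg S A"
  unfolding XUD_def Rn_nonneg_def by auto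

lemma XUD_nonneg: "x \<in> XUD S A m \<Longrightarrow> 0 \<le> x $ i"
  unfolding XUD_def by (cases "i \<in> idx S A") (auto simp del: split_paired_All)

lemma sum_XUD:
  assumes "x \<in> XUD S A m"
  shows "(\<Sum>i\<in>UNIV. x $ i) = (\<Sum>c\<in>UNIV. m c)"
proof -
  have "(\<Sum>i\<in>UNIV. x $ i) = (\<Sum>i\<in>idx S A. x $ i)"
    using assms unfolding XUD_def by (intro sum.mono_neutral_right) (auto simp del: split_paired_All)
  also have "\<dots> = (\<Sum>(c, u)\<in>idx S A. x $ (c, u))"
    by (simp add: split_beta)
  also have "\<dots> = (\<Sum>c\<in>UNIV. m c)"
    using assms unfolding sum_idx XUD_def by simp
  finally show ?thesis .
qed

lemma closed_XUD: "closed (XUD S A m)"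
  unfolding XUD_def Ball_def
  by (intro closed_Collect_conj closed_Collect_all closed_Collect_imp closed_Collect_eq
      closed_Collect_le open_Collect_const continuous_intros)

lemma convex_XUD: "convex (XUD S A m)"
  unfolding convex_def XUD_def
  by (auto simp: sum.distrib simp flip: sum_distrib_left distrib_right)

lemma compact_XUD: "compact (XUD S A m)"
proof -
  have "XUD S A m \<subseteq> {x. (\<forall>i. 0 \<le> x $ i) \<and> (\<Sum>i\<in>UNIV. x $ i) \<le> (\<Sum>c\<in>UNIV. m c)}"
    by (auto simp: XUD_nonneg sum_XUD)
  then have "bounded (XUD S A m)"
    by (rule bounded_subset[OF bounded_nonneg_sum_le])
  then show ?thesis
    using closed_XUD by (simp add: compact_eq_bounded_closed)
qed

lemma C1_nonneg_imp_continuous_on: "C1_nonneg f \<Longrightarrow> continuous_on {0..} f"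
  unfolding C1_nonneg_def continuous_on_eq_continuous_within
  using DERIV_continuous by fastforce

lemma integral_from_0_has_real_derivative:
  assumes "continuous_on {0..} g" "0 \<le> t"
  shows "((\<lambda>t. integral {0..t} g) has_real_derivative g t) (at t within {0..})"
proof -
  have "continuous_on {0..t + 1} g"
    using assms(1) by (rule continuous_on_subset) auto
  then have "((\<lambda>t. integral {0..t} g) has_real_derivative g t) (at t within {0..t + 1})"
    by (rule integral_has_real_derivative) (use assms(2) in simp)
  moreover have "at t within {0..t + 1} = at t within {0..}"
    by (rule at_within_nhd[where S="{t - 1<..<t + 1}"]) auto
  ultimately show ?thesis
    by simp
qed

lemma has_derivative_sum_integral_linear:
  fixes L :: "'i \<Rightarrow> 'a::euclidean_space \<Rightarrow> real"
  assumes linear: "\<And>i. i \<in> I \<Longrightarrow> linear (L i)"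
    and cont: "\<And>i. i \<in> I \<Longrightarrow> continuous_on {0..} (g i)"
    and nonneg: "\<And>i y. i \<in> I \<Longrightarrow> y \<in> X \<Longrightarrow> 0 \<le> L i y"
    and "x \<in> X"
  shows "((\<lambda>y. \<Sum>i\<in>I. integral {0..L i y} (g i)) has_derivative (\<lambda>h. \<Sum>i\<in>I. g i (L i x) * L i h))
           (at x within X)"
proof (rule has_derivative_sum)
  fix i assume "i \<in> I"
  have primitive: "((\<lambda>t. integral {0..t} (g i)) has_derivative (\<lambda>h. g i t * h)) (at t within {0..})"
    if "t \<in> {0..}" for t
    using integral_from_0_has_real_derivative[OF cont[OF \<open>i \<in> I\<close>]] that
    by (simp add: has_field_derivative_def)
  have "L i ` X \<subseteq> {0..}"
    using nonneg \<open>i \<in> I\<close> by auto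
  moreover have "(L i has_derivative L i) (at x within X)"
    using linear[OF \<open>i \<in> I\<close>] by (rule linear_imp_has_derivative)
  ultimately show "((\<lambda>y. integral {0..L i y} (g i)) has_derivative (\<lambda>h. g i (L i x) * L i h)) (at x within X)"
    using has_derivative_in_compose2[OF primitive _ \<open>x \<in> X\<close>] by blast
qed

definition potential :: "('c::finite \<Rightarrow> 's::finite set) \<Rightarrow> ('c \<Rightarrow> 's \<Rightarrow> 'r::finite set set)
    \<Rightarrow> ('c \<Rightarrow> 's \<Rightarrow> 's \<Rightarrow> 'r set \<Rightarrow> real) \<Rightarrow> real \<Rightarrow> ('r \<Rightarrow> real \<Rightarrow> real)
    \<Rightarrow> real ^ ('c \<times> ('s \<Rightarrow> 'r set)) \<Rightarrow> real" where
  "potential S A phi lam w x = (\<Sum>r\<in>UNIV. integral {0..flow S A phi lam r x} (w r)) / lam"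

lemma best_response_sum_le:
  fixes F x y :: "'u \<Rightarrow> real"
  assumes "finite P"
    and x_nonneg: "\<And>u. u \<in> P \<Longrightarrow> 0 \<le> x u" and y_nonneg: "\<And>u. u \<in> P \<Longrightarrow> 0 \<le> y u"
    and same_mass: "(\<Sum>u\<in>P. y u) = (\<Sum>u\<in>P. x u)"
    and best: "\<And>u v. u \<in> P \<Longrightarrow> 0 < x u \<Longrightarrow> v \<in> P \<Longrightarrow> F v \<le> F u"
  shows "(\<Sum>u\<in>P. F u * y u) \<le> (\<Sum>u\<in>P. F u * x u)"
proof -
  define Fmax where "Fmax = Max (F ` P)"
  have le_max: "F u \<le> Fmax" if "u \<in> P" for u
    using \<open>finite P\<close> that unfolding Fmax_def by simp
  have eq_max: "F u * x u = Fmax * x u" if "u \<in> P" for u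
  proof (cases "0 < x u")
    case True
    then have "Fmax = F u"
      unfolding Fmax_def using best that \<open>finite P\<close> by (intro Max_eqI) auto
    then show ?thesis by simp
  next
    case False
    then show ?thesis
      using x_nonneg[OF that] by simp
  qed
  have "(\<Sum>u\<in>P. F u * y u) \<le> (\<Sum>u\<in>P. Fmax * y u)"
    using le_max y_nonneg by (intro sum_mono mult_right_mono) auto
  also have "\<dots> = (\<Sum>u\<in>P. Fmax * x u)"
    using same_mass by (simp flip: sum_distrib_left)
  also have "\<dots> = (\<Sum>u\<in>P. F u * x u)"
    by (rule sum.cong[OF refl]) (simp add: eq_max)
  finally show ?thesis .
qed

lemma antimono_eq_on_segment:
  fixes f :: "real \<Rightarrow> real"
  assumes antimono: "\<And>a b. 0 \<le> a \<Longrightarrow> a \<le> b \<Longrightarrow> f b \<le> f a"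
    and "0 \<le> p" "0 \<le> q" "f p = f q" "0 \<le> a" "0 \<le> b" "a + b = 1"
  shows "f (a * p + b * q) = f p"
proof -
  have "a * p + b * q \<le> max p q"
    using assms by (intro convex_bound_le) auto
  moreover have "a * (- p) + b * (- q) \<le> - min p q"
    using assms by (intro convex_bound_le) auto
  ultimately have "f (max p q) \<le> f (a * p + b * q)" "f (a * p + b * q) \<le> f (min p q)"
    using antimono assms(2,3) by auto
  moreover have "f (max p q) = f p" "f (min p q) = f p"
    using \<open>f p = f q\<close> by (auto simp: max_def min_def)
  ultimately show ?thesis
    by simp
qed

lemma nash_variational_inequality:
  assumes "0 \<le> lam" "x \<in> nash_set S A phi lam w m" "y \<in> XUD S A m"
  shows "(\<Sum>r\<in>UNIV. w r (flow S A phi lam r x) * flow S A phi lam r y)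
           \<le> (\<Sum>r\<in>UNIV. w r (flow S A phi lam r x) * flow S A phi lam r x)"
proof -
  have x: "x \<in> XUD S A m"
    using assms(2) unfolding nash_set_def by simp
  have "(\<Sum>u\<in>policies S A c. payoff S A phi lam w c u x * y $ (c, u))
          \<le> (\<Sum>u\<in>policies S A c. payoff S A phi lam w c u x * x $ (c, u))" for c
  proof (rule best_response_sum_le)
    show "(\<Sum>u\<in>policies S A c. y $ (c, u)) = (\<Sum>u\<in>policies S A c. x $ (c, u))"
      using x assms(3) unfolding XUD_def by simp
    show "payoff S A phi lam w c v x \<le> payoff S A phi lam w c u x"
      if "u \<in> policies S A c" "0 < x $ (c, u)" "v \<in> policies S A c" for u v
      using assms(2) that unfolding nash_set_def by blast
  qed (use XUD_nonneg x assms(3) in auto)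
  then have "(\<Sum>(c, u)\<in>idx S A. payoff S A phi lam w c u x * y $ (c, u))
               \<le> (\<Sum>(c, u)\<in>idx S A. payoff S A phi lam w c u x * x $ (c, u))"
    unfolding sum_idx by (rule sum_mono)
  then show ?thesis
    unfolding sum_reward_flow_eq using \<open>0 \<le> lam\<close> by (rule mult_left_mono)
qed

locale steady_state_game =
  fixes S :: "'c::finite \<Rightarrow> 's::finite set" and A :: "'c \<Rightarrow> 's \<Rightarrow> 'r::finite set set"
    and phi :: "'c \<Rightarrow> 's \<Rightarrow> 's \<Rightarrow> 'r set \<Rightarrow> real" and lam :: real
  assumes kernel_nonneg: "\<And>c s a s'. s \<in> S c \<Longrightarrow> a \<in> A c s \<Longrightarrow> s' \<in> S c \<Longrightarrow> 0 \<le> phi c s' s a"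
    and kernel_sum: "\<And>c s a. s \<in> S c \<Longrightarrow> a \<in> A c s \<Longrightarrow> (\<Sum>s'\<in>S c. phi c s' s a) = 1"
    and A2: "A2 S A phi"
    and lam_pos: "0 < lam"
begin

lemma stationary_eta:
  assumes "u \<in> policies S A c"
  shows "stationary S phi lam c u (eta S phi lam c u)"
proof -
  have u: "u s \<in> A c s" if "s \<in> S c" for s
    using assms that unfolding policies_def by auto
  have nonneg: "\<And>s t. s \<in> S c \<Longrightarrow> t \<in> S c \<Longrightarrow> 0 \<le> phi c t s (u s)"
    using kernel_nonneg u by blast
  have stochastic: "\<And>s. s \<in> S c \<Longrightarrow> (\<Sum>t\<in>S c. phi c t s (u s)) = 1"
    using kernel_sum u by blast
  have unique_class: "\<exists>!K. recurrent_class S phi c u K"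
    using A2 assms unfolding A2_def by blast
  then have "S c \<noteq> {}"
    unfolding recurrent_class_def comm_class_def by auto
  then obtain \<eta> where \<eta>: "stationary S phi lam c u \<eta>"
    using stochastic_matrix_fixed_distribution[of "S c" "\<lambda>t s. phi c t s (u s)"] nonneg stochastic
    unfolding stationary_def by auto
  moreover have "\<eta>' = \<eta>" if "stationary S phi lam c u \<eta>'" for \<eta>'
    using lam_pos that \<eta> by (intro stationary_unique[OF nonneg stochastic unique_class]) auto
  ultimately show ?thesis
    unfolding eta_def by (metis theI)
qed

lemma eta_nonneg: "u \<in> policies S A c \<Longrightarrow> 0 \<le> eta S phi lam c u s"
  using stationary_eta unfolding stationary_def by (cases "s \<in> S c") auto

lemma flow_nonneg:
  assumes "x \<in> Rn_nonneg S A"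
  shows "0 \<le> flow S A phi lam r x"
proof -
  have "0 \<le> usage S phi lam r c u * x $ (c, u)" if "(c, u) \<in> idx S A" for c u
    using that assms eta_nonneg unfolding usage_def Rn_nonneg_def idx_def
    by (auto intro!: sum_nonneg mult_nonneg_nonneg)
  then show ?thesis
    unfolding flow_eq_usage using lam_pos
    by (intro mult_nonneg_nonneg sum_nonneg) (auto split: prod.splits)
qed

lemma continuous_on_payoff:
  assumes "\<And>r. continuous_on {0..} (w r)"
  shows "continuous_on (Rn_nonneg S A) (payoff S A phi lam w c u)"
proof -
  have "continuous_on (Rn_nonneg S A) (\<lambda>x. w r (flow S A phi lam r x))" for r
    using linear_flow flow_nonneg
    by (intro continuous_on_compose2[OF assms linear_continuous_on])
       (auto simp: linear_conv_bounded_linear)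
  then show ?thesis
    unfolding payoff_eq_usage[abs_def] by (intro continuous_intros)
qed

lemma has_derivative_potential:
  assumes "\<And>r. continuous_on {0..} (w r)" "x \<in> Rn_nonneg S A"
  shows "(potential S A phi lam w has_derivative
           (\<lambda>h. \<Sum>(c, u)\<in>idx S A. payoff S A phi lam w c u x * h $ (c, u))) (at x within Rn_nonneg S A)"
proof -
  have "((\<lambda>y. \<Sum>r\<in>UNIV. integral {0..flow S A phi lam r y} (w r)) has_derivative
          (\<lambda>h. \<Sum>r\<in>UNIV. w r (flow S A phi lam r x) * flow S A phi lam r h)) (at x within Rn_nonneg S A)"
    using assms linear_flow flow_nonneg by (intro has_derivative_sum_integral_linear) auto
  then have "(potential S A phi lam w has_derivative
          (\<lambda>h. (\<Sum>r\<in>UNIV. w r (flow S A phi lam r x) * flow S A phi lam r h) / lam)) (at x within Rn_nonneg S A)"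
    unfolding potential_def[abs_def] by (rule bounded_linear.has_derivative[OF bounded_linear_divide])
  then show ?thesis
    unfolding sum_reward_flow_eq using lam_pos by simp
qed

lemma nash_rewards_eq:
  assumes antimono: "\<And>r a b. 0 \<le> a \<Longrightarrow> a \<le> b \<Longrightarrow> w r b \<le> w r a"
    and x: "x \<in> nash_set S A phi lam w m" and y: "y \<in> nash_set S A phi lam w m"
  shows "w r (flow S A phi lam r x) = w r (flow S A phi lam r y)"
proof -
  define \<sigma>x where "\<sigma>x r = flow S A phi lam r x" for r
  define \<sigma>y where "\<sigma>y r = flow S A phi lam r y" for r
  define d where "d r = (w r (\<sigma>x r) - w r (\<sigma>y r)) * (\<sigma>y r - \<sigma>x r)" for r
  have XUD: "x \<in> XUD S A m" "y \<in> XUD S A m"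
    using x y unfolding nash_set_def by auto
  have d_nonneg: "0 \<le> d r" for r
  proof -
    have "0 \<le> \<sigma>x r" "0 \<le> \<sigma>y r"
      using XUD XUD_subset_Rn_nonneg flow_nonneg unfolding \<sigma>x_def \<sigma>y_def by blast+
    then show ?thesis
      unfolding d_def using antimono[of "\<sigma>x r" "\<sigma>y r"] antimono[of "\<sigma>y r" "\<sigma>x r"]
      by (cases "\<sigma>x r \<le> \<sigma>y r") (auto intro: mult_nonneg_nonneg mult_nonpos_nonpos)
  qed
  have "(\<Sum>r\<in>UNIV. d r) = ((\<Sum>r\<in>UNIV. w r (\<sigma>x r) * \<sigma>y r) - (\<Sum>r\<in>UNIV. w r (\<sigma>x r) * \<sigma>x r))
      + ((\<Sum>r\<in>UNIV. w r (\<sigma>y r) * \<sigma>x r) - (\<Sum>r\<in>UNIV. w r (\<sigma>y r) * \<sigma>y r))"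
    unfolding d_def by (simp add: algebra_simps sum.distrib sum_subtractf)
  also have "\<dots> \<le> 0"
    using nash_variational_inequality[OF less_imp_le[OF lam_pos] x XUD(2)]
      nash_variational_inequality[OF less_imp_le[OF lam_pos] y XUD(1)]
    unfolding \<sigma>x_def \<sigma>y_def by simp
  finally have "d r = 0"
    using sum_nonneg_eq_0_iff[of UNIV d] d_nonneg by (simp add: antisym sum_nonneg)
  then show ?thesis
    unfolding d_def \<sigma>x_def \<sigma>y_def by auto
qed

lemma nash_flows_eq:
  assumes strict: "\<And>r a b. 0 \<le> a \<Longrightarrow> a < b \<Longrightarrow> w r b < w r a"
    and x: "x \<in> nash_set S A phi lam w m" and y: "y \<in> nash_set S A phi lam w m"
  shows "flow S A phi lam r x = flow S A phi lam r y"
proof (rule ccontr)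
  assume "flow S A phi lam r x \<noteq> flow S A phi lam r y"
  moreover have "0 \<le> flow S A phi lam r x" "0 \<le> flow S A phi lam r y"
    using x y XUD_subset_Rn_nonneg flow_nonneg unfolding nash_set_def by blast+
  moreover have "w r (flow S A phi lam r x) = w r (flow S A phi lam r y)"
    using strict x y by (intro nash_rewards_eq) (auto simp: order_le_less)
  ultimately show False
    using strict[of "flow S A phi lam r x" "flow S A phi lam r y" r]
      strict[of "flow S A phi lam r y" "flow S A phi lam r x" r]
    by linarith
qed

lemma convex_nash_set:
  assumes antimono: "\<And>r a b. 0 \<le> a \<Longrightarrow> a \<le> b \<Longrightarrow> w r b \<le> w r a"
  shows "convex (nash_set S A phi lam w m)"
proof (rule convexI)
  fix x y and a b :: real
  assume x: "x \<in> nash_set S A phi lam w m" and y: "y \<in> nash_set S A phi lam w m"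
    and "0 \<le> a" "0 \<le> b" "a + b = 1"
  define z where "z = a *\<^sub>R x + b *\<^sub>R y"
  have XUD: "x \<in> XUD S A m" "y \<in> XUD S A m"
    using x y unfolding nash_set_def by auto
  have "w r (flow S A phi lam r z) = w r (flow S A phi lam r x)" for r
  proof -
    have "flow S A phi lam r z = a * flow S A phi lam r x + b * flow S A phi lam r y"
      unfolding z_def by (simp add: linear_add[OF linear_flow] linear_scale[OF linear_flow])
    moreover have "0 \<le> flow S A phi lam r x" "0 \<le> flow S A phi lam r y"
      using XUD XUD_subset_Rn_nonneg flow_nonneg by blast+
    moreover have "w r (flow S A phi lam r x) = w r (flow S A phi lam r y)"
      using antimono x y by (rule nash_rewards_eq)
    moreover have "w r (a * flow S A phi lam r x + b * flow S A phi lam r y) = w r (flow S A phi lam r x)"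
      by (rule antimono_eq_on_segment) (use antimono calculation \<open>0 \<le> a\<close> \<open>0 \<le> b\<close> \<open>a + b = 1\<close> in auto)
    ultimately show ?thesis
      by simp
  qed
  then have payoff_z: "payoff S A phi lam w c u z = payoff S A phi lam w c u x"
    "payoff S A phi lam w c u z = payoff S A phi lam w c u y" for c u
    using nash_rewards_eq[OF antimono x y] unfolding payoff_def by auto
  have "z \<in> XUD S A m"
    unfolding z_def using convex_XUD XUD \<open>0 \<le> a\<close> \<open>0 \<le> b\<close> \<open>a + b = 1\<close> by (rule convexD)
  moreover have "payoff S A phi lam w c v z \<le> payoff S A phi lam w c u z"
    if "u \<in> policies S A c" "v \<in> policies S A c" "0 < z $ (c, u)" for c u v
  proof -
    have "0 < x $ (c, u) \<or> 0 < y $ (c, u)"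
    proof (rule ccontr)
      assume "\<not> (0 < x $ (c, u) \<or> 0 < y $ (c, u))"
      then have "x $ (c, u) = 0" "y $ (c, u) = 0"
        using XUD_nonneg[OF XUD(1), of "(c, u)"] XUD_nonneg[OF XUD(2), of "(c, u)"] by auto
      then show False
        using \<open>0 < z $ (c, u)\<close> unfolding z_def by simp
    qed
    then show ?thesis
    proof
      assume "0 < x $ (c, u)"
      then show ?thesis
        using x that unfolding nash_set_def payoff_z(1) by blast
    next
      assume "0 < y $ (c, u)"
      then show ?thesis
        using y that unfolding nash_set_def payoff_z(2) by blast
    qed
  qed
  ultimately show "a *\<^sub>R x + b *\<^sub>R y \<in> nash_set S A phi lam w m"
    unfolding nash_set_def z_def by blast
qed

lemma compact_nash_set:
  assumes "\<And>r. continuous_on {0..} (w r)"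
  shows "compact (nash_set S A phi lam w m)"
proof -
  let ?best = "\<lambda>c u v. {x \<in> XUD S A m. 0 < x $ (c, u) \<longrightarrow>
                           payoff S A phi lam w c v x \<le> payoff S A phi lam w c u x}"
  have payoff_cont: "continuous_on (XUD S A m) (payoff S A phi lam w c u)" for c u
    using continuous_on_payoff[OF assms] XUD_subset_Rn_nonneg by (rule continuous_on_subset)
  have "closed (?best c u v)" for c u v
  proof -
    have "?best c u v = {x \<in> XUD S A m. x $ (c, u) \<le> 0}
        \<union> {x \<in> XUD S A m. payoff S A phi lam w c v x \<le> payoff S A phi lam w c u x}"
      by (auto simp: not_less)
    moreover have "closed {x \<in> XUD S A m. x $ (c, u) \<le> 0}"
      by (intro continuous_on_closed_Collect_le closed_XUD continuous_intros)
    moreover have "closed {x \<in> XUD S A m. payoff S A phi lam w c v x \<le> payoff S A phi lam w c u x}"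
      by (intro continuous_on_closed_Collect_le closed_XUD payoff_cont)
    ultimately show ?thesis
      by (simp add: closed_Un)
  qed
  then have "closed (\<Inter>c. \<Inter>u\<in>policies S A c. \<Inter>v\<in>policies S A c. ?best c u v)"
    by (intro closed_INT ballI)
  moreover have "nash_set S A phi lam w m
      = XUD S A m \<inter> (\<Inter>c. \<Inter>u\<in>policies S A c. \<Inter>v\<in>policies S A c. ?best c u v)"
    unfolding nash_set_def by auto
  ultimately show ?thesis
    using compact_Int_closed[OF compact_XUD] by simp
qed

end

theorem lemma4:
  fixes S :: "'c::finite \<Rightarrow> 's::finite set"
    and A :: "'c \<Rightarrow> 's \<Rightarrow> 'r::finite set set"
    and phi :: "'c \<Rightarrow> 's \<Rightarrow> 's \<Rightarrow> 'r set \<Rightarrow> real"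
    and lam :: real
    and m :: "'c \<Rightarrow> real"
    and w :: "'r \<Rightarrow> real \<Rightarrow> real"
  assumes mass_pos: "\<And>c. m c > 0"
    and actions_nonempty: "\<And>c s. s \<in> S c \<Longrightarrow> A c s \<noteq> {}"
    and kernel_nonneg: "\<And>c s a s'. s \<in> S c \<Longrightarrow> a \<in> A c s \<Longrightarrow> s' \<in> S c \<Longrightarrow> phi c s' s a \<ge> 0"
    and kernel_sum: "\<And>c s a. s \<in> S c \<Longrightarrow> a \<in> A c s \<Longrightarrow> (\<Sum>s' \<in> S c. phi c s' s a) = 1"
    and A2: "A2 S A phi"
    and lam_pos: "lam > 0"
    and w_C1: "\<And>r. C1_nonneg (w r)"
  shows "(\<exists>(U :: real ^ ('c \<times> ('s \<Rightarrow> 'r set)) \<Rightarrow> real) G.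
            (\<forall>x \<in> Rn_nonneg S A.
               (U has_derivative (\<lambda>h. \<Sum>i \<in> idx S A. G x i * h $ i)) (at x within Rn_nonneg S A)) \<and>
            (\<forall>i \<in> idx S A. continuous_on (Rn_nonneg S A) (\<lambda>x. G x i)) \<and>
            (\<forall>x \<in> XUD S A m. \<forall>(c, u) \<in> idx S A. G x (c, u) = payoff S A phi lam w c u x))
       \<and> ((\<forall>r a b. 0 \<le> a \<longrightarrow> a \<le> b \<longrightarrow> w r b \<le> w r a) \<longrightarrow>
            compact (nash_set S A phi lam w m) \<and> convex (nash_set S A phi lam w m))
       \<and> ((\<forall>r a b. 0 \<le> a \<longrightarrow> a < b \<longrightarrow> w r b < w r a) \<longrightarrow>
            (\<forall>x \<in> nash_set S A phi lam w m. \<forall>y \<in> nash_set S A phi lam w m.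
               \<forall>r. flow S A phi lam r x = flow S A phi lam r y))"
proof -
  interpret steady_state_game S A phi lam
    using kernel_nonneg kernel_sum A2 lam_pos by unfold_locales
  have w_cont: "\<And>r. continuous_on {0..} (w r)"
    using w_C1 by (rule C1_nonneg_imp_continuous_on)
  show ?thesis
  proof (intro conjI impI ballI allI exI[of _ "potential S A phi lam w"]
      exI[of _ "\<lambda>x i. payoff S A phi lam w (fst i) (snd i) x"])
    show "(potential S A phi lam w has_derivative
        (\<lambda>h. \<Sum>i\<in>idx S A. payoff S A phi lam w (fst i) (snd i) x * h $ i)) (at x within Rn_nonneg S A)"
      if "x \<in> Rn_nonneg S A" for x
      using has_derivative_potential[where w=w, OF w_cont that] by (simp add: split_beta)
    show "flow S A phi lam r x = flow S A phi lam r y"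
      if "\<forall>r a b. 0 \<le> a \<longrightarrow> a < b \<longrightarrow> w r b < w r a"
        and "x \<in> nash_set S A phi lam w m" "y \<in> nash_set S A phi lam w m" for x y r
      using that by (blast intro: nash_flows_eq)
  qed (auto simp: continuous_on_payoff[where w=w, OF w_cont] compact_nash_set[where w=w, OF w_cont]
      convex_nash_set)
qed

end
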